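(* Let $\mathcal{R}$ be a cell space and let $E$ be a nonempty subset of $G/G_0$. Put $E'=\{g(g')^{-1}G_0: e,e'\in E,\ g\in e,\ g'\in e'\}$. Then there exists an $(E,E')$-tiling of $\mathcal{R}$.
   Context: A cell space $\mathcal{R}$ consists of a group $G$ acting transitively on the left on a nonempty set $M$ via $\triangleright$, a point $m_0\in M$ and a family $(g_{m_0,m})_{m\in M}$ in $G$ with $g_{m_0,m}\triangleright m_0=m$. $G_0$ is the stabiliser of $m_0$ and $G/G_0$ the set of left cosets (elements of $G/G_0$ are subsets of $G$). The right semi-action $\triangleleft\colon M\times G/G_0\to M$ is $m\triangleleft gG_0=g_{m_0,m}g\triangleright m_0$; for $E\subseteq G/G_0$, $m\triangleleft E=\{m\triangleleft e:e\in E\}$. For $E,E'\subseteq G/G_0$, a subset $T\subseteq M$ is an $(E,E')$-tiling of $\mathcal{R}$ if the family $(t\triangleleft E)_{t\in T}$ is pairwise disjoint and the family $(t\triangleleft E')_{t\in T}$ covers $M$. *)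

theory Defs
  imports "HOL-Algebra.Group_Action"
begin

definition cell_space :: "('g, 'b) monoid_scheme \<Rightarrow> 'm set \<Rightarrow> ('g \<Rightarrow> 'm \<Rightarrow> 'm) \<Rightarrow> 'm \<Rightarrow> ('m \<Rightarrow> 'g) \<Rightarrow> bool"
  where "cell_space G M phi m0 gfam \<longleftrightarrow>
     group G \<and> transitive_action G M phi \<and> M \<noteq> {} \<and> m0 \<in> M \<and>
     (\<forall>m \<in> M. gfam m \<in> carrier G \<and> phi (gfam m) m0 = m)"

definition stab0 :: "('g, 'b) monoid_scheme \<Rightarrow> ('g \<Rightarrow> 'm \<Rightarrow> 'm) \<Rightarrow> 'm \<Rightarrow> 'g set"
  where "stab0 G phi m0 = stabilizer G phi m0"

definition left_cosets :: "('g, 'b) monoid_scheme \<Rightarrow> ('g \<Rightarrow> 'm \<Rightarrow> 'm) \<Rightarrow> 'm \<Rightarrow> 'g set set"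
  where "left_cosets G phi m0 = {g <#\<^bsub>G\<^esub> stab0 G phi m0 | g. g \<in> carrier G}"

text \<open>Right semi-action m <| gG0 = gfam m * g |> m0 (well-defined; uses a representative of the coset).\<close>
definition semi_act :: "('g, 'b) monoid_scheme \<Rightarrow> ('g \<Rightarrow> 'm \<Rightarrow> 'm) \<Rightarrow> 'm \<Rightarrow> ('m \<Rightarrow> 'g) \<Rightarrow> 'm \<Rightarrow> 'g set \<Rightarrow> 'm"
  where "semi_act G phi m0 gfam m c = phi (gfam m \<otimes>\<^bsub>G\<^esub> (SOME g. g \<in> c)) m0"

definition semi_act_set :: "('g, 'b) monoid_scheme \<Rightarrow> ('g \<Rightarrow> 'm \<Rightarrow> 'm) \<Rightarrow> 'm \<Rightarrow> ('m \<Rightarrow> 'g) \<Rightarrow> 'm \<Rightarrow> 'g set set \<Rightarrow> 'm set"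
  where "semi_act_set G phi m0 gfam m E = (\<lambda>e. semi_act G phi m0 gfam m e) ` E"

definition is_tiling :: "('g, 'b) monoid_scheme \<Rightarrow> 'm set \<Rightarrow> ('g \<Rightarrow> 'm \<Rightarrow> 'm) \<Rightarrow> 'm \<Rightarrow> ('m \<Rightarrow> 'g)
    \<Rightarrow> 'g set set \<Rightarrow> 'g set set \<Rightarrow> 'm set \<Rightarrow> bool"
  where "is_tiling G M phi m0 gfam E E' T \<longleftrightarrow>
     T \<subseteq> M \<and>
     (\<forall>t \<in> T. \<forall>t' \<in> T. t \<noteq> t' \<longrightarrow>
        semi_act_set G phi m0 gfam t E \<inter> semi_act_set G phi m0 gfam t' E = {}) \<and>
     M \<subseteq> (\<Union>t \<in> T. semi_act_set G phi m0 gfam t E')"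

end

theory Submission
  imports Defs
begin

text \<open>Choose, by Zorn's lemma, a maximal \<open>T \<subseteq> M\<close> whose cells \<open>t \<triangleleft> E\<close> are pairwise
  disjoint. Every \<open>m \<in> M\<close> then has a cell meeting the cell of some \<open>t \<in> T\<close> (its own if
  \<open>m \<in> T\<close>, by maximality otherwise). If \<open>m \<triangleleft> gG\<^sub>0 = t \<triangleleft> g'G\<^sub>0\<close>, then chasing the
  representatives shows \<open>m = t \<triangleleft> g''g\<^sup>-\<^sup>1G\<^sub>0\<close> with \<open>g'' \<in> g'G\<^sub>0\<close>, i.e. \<open>m \<in> t \<triangleleft> E'\<close>.\<close>

lemma exists_maximal_pairwise_disjnt:
  fixes f :: "'a \<Rightarrow> 'b set"
  assumes "\<And>m. m \<in> M \<Longrightarrow> f m \<noteq> {}"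
  shows "\<exists>T\<subseteq>M. pairwise (\<lambda>s t. disjnt (f s) (f t)) T \<and> (\<forall>m\<in>M. \<exists>t\<in>T. \<not> disjnt (f m) (f t))"
proof -
  let ?S = "{T. T \<subseteq> M \<and> pairwise (\<lambda>s t. disjnt (f s) (f t)) T}"
  have "\<Union>C \<in> ?S" if "C \<in> chains ?S" for C
  proof -
    have "C \<subseteq> ?S" and "chain\<^sub>\<subseteq> C"
      using that by (simp_all add: chains_def)
    then show ?thesis
      using pairwise_chain_Union[of C] by blast
  qed
  then obtain T where T: "T \<in> ?S" and maximal: "\<forall>X\<in>?S. T \<subseteq> X \<longrightarrow> X = T"
    using Zorn_Lemma[of ?S] by blast
  have "\<exists>t\<in>T. \<not> disjnt (f m) (f t)" if m: "m \<in> M" for m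
  proof (cases "m \<in> T")
    case True
    then show ?thesis using assms[OF m] by (auto simp: disjnt_def)
  next
    case False
    then have "insert m T \<notin> ?S" using maximal by blast
    then show ?thesis using T m by (auto simp: pairwise_insert dest: disjnt_sym)
  qed
  then show ?thesis using T by blast
qed

lemma (in group_action) inv_mult_in_stabilizer:
  assumes "x \<in> E" "g \<in> carrier G" "h \<in> carrier G" "\<phi> g x = \<phi> h x"
  shows "inv g \<otimes> h \<in> stabilizer G \<phi> x"
proof -
  interpret group G using group_hom group_hom.axioms(1) by blast
  have "\<phi> (inv g \<otimes> h) x = \<phi> (inv g) (\<phi> g x)"
    using assms composition_rule by simp
  also have "\<dots> = x"
    using assms orbit_sym_aux by blast
  finally show ?thesis
    using assms by (simp add: stabilizer_def)
qed

definition difference_cosets :: "('g, 'b) monoid_scheme \<Rightarrow> 'g set \<Rightarrow> 'g set set \<Rightarrow> 'g set set"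
  where "difference_cosets G H E =
    {(g \<otimes>\<^bsub>G\<^esub> inv\<^bsub>G\<^esub> g') <#\<^bsub>G\<^esub> H | g g' e e'. e \<in> E \<and> e' \<in> E \<and> g \<in> e \<and> g' \<in> e'}"

context
  fixes G :: "('g, 'b) monoid_scheme" (structure) and M :: "'m set" and phi :: "'g \<Rightarrow> 'm \<Rightarrow> 'm"
    and m0 :: 'm and gfam :: "'m \<Rightarrow> 'g"
  assumes cell_space: "cell_space G M phi m0 gfam"
begin

interpretation transitive_action G M phi
  using cell_space by (simp add: cell_space_def)

interpretation group G
  using cell_space by (simp add: cell_space_def)

lemma m0_in_M: "m0 \<in> M"
  using cell_space by (simp add: cell_space_def)

lemma gfam_carrier: "m \<in> M \<Longrightarrow> gfam m \<in> carrier G"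
  and gfam_act: "m \<in> M \<Longrightarrow> phi (gfam m) m0 = m"
  using cell_space by (simp_all add: cell_space_def)

lemma subgroup_stab0: "subgroup (stab0 G phi m0) G"
  unfolding stab0_def using stabilizer_subgroup m0_in_M .

lemma l_coset_stab0_self: "x \<in> carrier G \<Longrightarrow> x \<in> x <# stab0 G phi m0"
  using subgroup.lcos_module_rev[OF subgroup_stab0 is_group, of x x] subgroup.one_closed[OF subgroup_stab0]
  by simp

lemma semi_act_l_coset:
  assumes "m \<in> M" "x \<in> carrier G"
  shows "semi_act G phi m0 gfam m (x <# stab0 G phi m0) = phi (gfam m \<otimes> x) m0"
proof -
  let ?H = "stab0 G phi m0"
  have "(SOME g. g \<in> x <# ?H) \<in> x <# ?H"
    using l_coset_stab0_self[OF assms(2)] by (rule someI)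
  then obtain h where h: "h \<in> ?H" and repr: "(SOME g. g \<in> x <# ?H) = x \<otimes> h"
    unfolding l_coset_def by blast
  have h_carrier: "h \<in> carrier G" and h_fixes: "phi h m0 = m0"
    using h by (auto simp: stab0_def stabilizer_def)
  have gx: "gfam m \<otimes> x \<in> carrier G"
    using assms gfam_carrier by simp
  have "semi_act G phi m0 gfam m (x <# ?H) = phi (gfam m \<otimes> x \<otimes> h) m0"
    using assms gfam_carrier h_carrier by (simp add: semi_act_def repr m_assoc)
  also have "\<dots> = phi (gfam m \<otimes> x) (phi h m0)"
    using composition_rule[OF m0_in_M gx h_carrier] .
  finally show ?thesis
    using h_fixes by simp
qed

lemma semi_act_set_nonempty: "E \<noteq> {} \<Longrightarrow> semi_act_set G phi m0 gfam m E \<noteq> {}"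
  by (simp add: semi_act_set_def)

text \<open>Writing \<open>e = xG\<^sub>0\<close>, \<open>e' = yG\<^sub>0\<close>, \<open>b = gfam t\<close>, \<open>c = gfam m\<close>: the witness is
  \<open>(b\<^sup>-\<^sup>1cx)x\<^sup>-\<^sup>1G\<^sub>0\<close>, where \<open>b\<^sup>-\<^sup>1cx \<in> e'\<close> because \<open>by\<close> and \<open>cx\<close> move \<open>m\<^sub>0\<close> to the same point.\<close>

lemma meeting_cells_imp_mem_semi_act_set:
  assumes E: "E \<subseteq> left_cosets G phi m0" and "m \<in> M" "t \<in> M"
    and meet: "\<not> disjnt (semi_act_set G phi m0 gfam m E) (semi_act_set G phi m0 gfam t E)"
  shows "m \<in> semi_act_set G phi m0 gfam t (difference_cosets G (stab0 G phi m0) E)"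
proof -
  let ?H = "stab0 G phi m0"
  obtain e e' where "e \<in> E" "e' \<in> E"
    and same_point: "semi_act G phi m0 gfam m e = semi_act G phi m0 gfam t e'"
    using meet by (auto simp: disjnt_def semi_act_set_def)
  obtain x where x: "x \<in> carrier G" "e = x <# ?H"
    using E \<open>e \<in> E\<close> by (auto simp: left_cosets_def)
  obtain y where y: "y \<in> carrier G" "e' = y <# ?H"
    using E \<open>e' \<in> E\<close> by (auto simp: left_cosets_def)
  define b c where "b = gfam t" and "c = gfam m"
  have b: "b \<in> carrier G" and c: "c \<in> carrier G"
    using assms gfam_carrier b_def c_def by auto
  have "phi (b \<otimes> y) m0 = phi (c \<otimes> x) m0"
    using same_point assms x y by (simp add: semi_act_l_coset b_def c_def)
  then have "inv (b \<otimes> y) \<otimes> (c \<otimes> x) \<in> ?H"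
    unfolding stab0_def using inv_mult_in_stabilizer[OF m0_in_M] b c x y by simp
  also have "inv (b \<otimes> y) \<otimes> (c \<otimes> x) = inv y \<otimes> (inv b \<otimes> c \<otimes> x)"
    using b c x y by (simp add: inv_mult_group m_assoc)
  finally have "inv b \<otimes> c \<otimes> x \<in> e'"
    using subgroup.lcos_module_rev[OF subgroup_stab0 is_group] b c x y by simp
  moreover have "x \<in> e"
    using x l_coset_stab0_self by simp
  ultimately have "(inv b \<otimes> c \<otimes> x \<otimes> inv x) <# ?H \<in> difference_cosets G ?H E"
    using \<open>e \<in> E\<close> \<open>e' \<in> E\<close> unfolding difference_cosets_def by blast
  moreover have "b \<otimes> (inv b \<otimes> c \<otimes> x \<otimes> inv x) = c"
    using b c x by (simp add: m_assoc flip: m_assoc[of b "inv b"])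
  then have "m = semi_act G phi m0 gfam t ((inv b \<otimes> c \<otimes> x \<otimes> inv x) <# ?H)"
    using assms b c x by (simp add: semi_act_l_coset gfam_act b_def c_def)
  ultimately show ?thesis
    unfolding semi_act_set_def by (rule rev_image_eqI)
qed

end

theorem theorem2:
  fixes G :: "('g, 'b) monoid_scheme" and M :: "'m set" and phi :: "'g \<Rightarrow> 'm \<Rightarrow> 'm"
    and m0 :: 'm and gfam :: "'m \<Rightarrow> 'g" and E :: "'g set set"
  assumes "cell_space G M phi m0 gfam"
    and "E \<subseteq> left_cosets G phi m0" and "E \<noteq> {}"
  shows "\<exists>T. is_tiling G M phi m0 gfam E
     {(g \<otimes>\<^bsub>G\<^esub> inv\<^bsub>G\<^esub> g') <#\<^bsub>G\<^esub> stab0 G phi m0 | g g' e e'. e \<in> E \<and> e' \<in> E \<and> g \<in> e \<and> g' \<in> e'} T"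
proof -
  let ?cell = "\<lambda>m. semi_act_set G phi m0 gfam m E"
  let ?E' = "difference_cosets G (stab0 G phi m0) E"
  have "\<And>m. m \<in> M \<Longrightarrow> ?cell m \<noteq> {}"
    using semi_act_set_nonempty[OF assms(1,3)] .
  then obtain T where "T \<subseteq> M" and disjoint: "pairwise (\<lambda>s t. disjnt (?cell s) (?cell t)) T"
    and meets: "\<forall>m\<in>M. \<exists>t\<in>T. \<not> disjnt (?cell m) (?cell t)"
    using exists_maximal_pairwise_disjnt[of M ?cell] by blast
  have "M \<subseteq> (\<Union>t\<in>T. semi_act_set G phi m0 gfam t ?E')"
  proof
    fix m assume "m \<in> M"
    with meets obtain t where "t \<in> T" "\<not> disjnt (?cell m) (?cell t)" by blast
    with \<open>m \<in> M\<close> \<open>T \<subseteq> M\<close> show "m \<in> (\<Union>t\<in>T. semi_act_set G phi m0 gfam t ?E')"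
      using meeting_cells_imp_mem_semi_act_set[OF assms(1,2)] by blast
  qed
  with \<open>T \<subseteq> M\<close> disjoint have "is_tiling G M phi m0 gfam E ?E' T"
    by (simp add: is_tiling_def pairwise_def disjnt_def)
  then show ?thesis
    unfolding difference_cosets_def by (rule exI)
qed

end
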